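(* Let $E\subseteq\mathbb{R}$ and let $f:E\to\mathbb{R}$ be Abel continuous on $E$. Then $f$ is continuous on $E$ in the ordinary sense.
   Context: A sequence $(p_n)_{n\ge 0}$ of real numbers is Abel convergent to $\ell\in\mathbb{R}$ if the series $\sum_{k=0}^{\infty}p_k x^k$ converges for every $0\le x<1$ and $\lim_{x\to 1^-}(1-x)\sum_{k=0}^{\infty}p_k x^k=\ell$. A function $f:E\to\mathbb{R}$ is Abel continuous on $E$ if for every sequence $(p_n)$ of points of $E$ that is Abel convergent to a point $\ell\in E$, the sequence $(f(p_n))$ is Abel convergent to $f(\ell)$. *)

theory Defs
  imports "HOL-Analysis.Analysis"
begin

definition abel_convergent :: "(nat \<Rightarrow> real) \<Rightarrow> real \<Rightarrow> bool" where
  "abel_convergent p l \<longleftrightarrow>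
     (\<forall>x::real. 0 \<le> x \<and> x < 1 \<longrightarrow> summable (\<lambda>k. p k * x ^ k)) \<and>
     ((\<lambda>x. (1 - x) * (\<Sum>k. p k * x ^ k)) \<longlongrightarrow> l) (at_left 1)"

definition abel_continuous_on :: "real set \<Rightarrow> (real \<Rightarrow> real) \<Rightarrow> bool" where
  "abel_continuous_on E f \<longleftrightarrow>
     (\<forall>p l. (\<forall>n. p n \<in> E) \<longrightarrow> l \<in> E \<longrightarrow> abel_convergent p l \<longrightarrow>
        abel_convergent (\<lambda>n. f (p n)) (f l))"

end

theory Submission
  imports Defs
begin

text \<open>Abel summation is regular: a convergent sequence is Abel convergent to its limit,
since after subtracting the limit the weights \<open>(1 - x) x\<^sup>k\<close> of any fixed initial segment
tend to \<open>0\<close> while the tail is uniformly small. Abel limits are monotone, so if \<open>f (u n)\<close>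
stayed at distance \<open>e\<close> from \<open>f a\<close> along a subsequence of a sequence \<open>u \<longlonglongrightarrow> a\<close>, then along a
further subsequence it would stay on one side of \<open>f a\<close>, and its Abel limit could not be
\<open>f a\<close>; but Abel continuity applied to that subsequence of \<open>u\<close> says it is.\<close>

lemma summable_power_series_if_bounded:
  fixes q :: "nat \<Rightarrow> real"
  assumes "\<And>k. \<bar>q k\<bar> \<le> B" and "0 \<le> x" "x < 1"
  shows "summable (\<lambda>k. q k * x ^ k)"
proof (rule summable_comparison_test[where g = "\<lambda>k. B * x ^ k"])
  have "0 \<le> B" using assms(1)[of 0] by linarith
  then show "\<exists>N. \<forall>k\<ge>N. norm (q k * x ^ k) \<le> B * x ^ k"
    using assms by (auto simp: abs_mult intro!: mult_right_mono)
  show "summable (\<lambda>k. B * x ^ k)"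
    using assms by (intro summable_mult summable_geometric) auto
qed

lemma abel_mean_abs_le:
  fixes q :: "nat \<Rightarrow> real"
  assumes bound: "\<And>k. \<bar>q k\<bar> \<le> B" and tail: "\<And>k. k \<ge> N \<Longrightarrow> \<bar>q k\<bar> \<le> e"
    and x: "0 \<le> x" "x < 1"
  shows "\<bar>(1 - x) * (\<Sum>k. q k * x ^ k)\<bar> \<le> (1 - x) * (real N * B) + e"
proof -
  have "0 \<le> B" using bound[of 0] by linarith
  define g where "g k = (if k < N then B else 0) + e * x ^ k" for k
  have "(\<lambda>k. if k < N then B else 0) sums (\<Sum>k<N. if k < N then B else 0)"
    by (rule sums_finite) auto
  moreover have "(\<lambda>k. e * x ^ k) sums (e * (1 / (1 - x)))"
    using x by (intro sums_mult geometric_sums) auto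
  ultimately have "g sums ((\<Sum>k<N. if k < N then B else 0) + e * (1 / (1 - x)))"
    unfolding g_def by (rule sums_add)
  then have g_sums: "g sums (real N * B + e / (1 - x))"
    by simp
  have "\<bar>q k * x ^ k\<bar> \<le> g k" for k
  proof (cases "k < N")
    case True
    have "\<bar>q k * x ^ k\<bar> \<le> B * 1"
      unfolding abs_mult using bound x \<open>0 \<le> B\<close> by (intro mult_mono) (auto simp: power_le_one)
    moreover have "0 \<le> e * x ^ k" using tail[of N] x by simp
    ultimately show ?thesis using True by (simp add: g_def)
  next
    case False
    then show ?thesis
      using tail[of k] x by (auto simp: g_def abs_mult intro: mult_right_mono)
  qed
  then have "\<bar>\<Sum>k. q k * x ^ k\<bar> \<le> real N * B + e / (1 - x)"
    using norm_suminf_le[of "\<lambda>k. q k * x ^ k" g] g_sums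
    by (simp add: sums_iff)
  then have "\<bar>(1 - x) * (\<Sum>k. q k * x ^ k)\<bar> \<le> (1 - x) * (real N * B + e / (1 - x))"
    using x by (simp add: abs_mult mult_left_mono)
  also have "\<dots> = (1 - x) * (real N * B) + e"
    using x by (simp add: field_simps)
  finally show ?thesis .
qed

lemma abel_mean_tendsto_zero:
  fixes q :: "nat \<Rightarrow> real"
  assumes "q \<longlonglongrightarrow> 0"
  shows "((\<lambda>x. (1 - x) * (\<Sum>k. q k * x ^ k)) \<longlongrightarrow> 0) (at_left 1)"
proof (rule tendstoI)
  fix e :: real assume e: "e > 0"
  obtain B where B: "\<And>k. \<bar>q k\<bar> \<le> B"
    using convergent_imp_Bseq[OF convergentI[OF assms]] by (auto simp: Bseq_def)
  obtain N where N: "\<And>k. k \<ge> N \<Longrightarrow> \<bar>q k\<bar> \<le> e / 2"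
    using assms e unfolding lim_sequentially by (metis dist_real_def diff_zero half_gt_zero less_imp_le)
  have "((\<lambda>x. (1 - x) * (real N * B)) \<longlongrightarrow> (1 - 1) * (real N * B)) (at_left 1)"
    by (intro tendsto_intros)
  then have "eventually (\<lambda>x. (1 - x) * (real N * B) < e / 2) (at_left (1::real))"
    using e by (intro order_tendstoD) auto
  moreover have "eventually (\<lambda>x. x \<in> {0<..<1}) (at_left (1::real))"
    by (rule eventually_at_left_real) auto
  ultimately show "eventually (\<lambda>x. dist ((1 - x) * (\<Sum>k. q k * x ^ k)) 0 < e) (at_left 1)"
  proof eventually_elim
    case (elim x)
    then show ?case using abel_mean_abs_le[of q B N "e / 2" x] B N by auto
  qed
qed

lemma abel_convergent_if_tendsto:
  fixes p :: "nat \<Rightarrow> real"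
  assumes "p \<longlonglongrightarrow> l"
  shows "abel_convergent p l"
proof -
  define q where "q = (\<lambda>n. p n - l)"
  have q: "q \<longlonglongrightarrow> 0"
    using tendsto_diff[OF assms tendsto_const[of l]] by (simp add: q_def)
  obtain B where B: "\<And>k. \<bar>q k\<bar> \<le> B"
    using convergent_imp_Bseq[OF convergentI[OF q]] by (auto simp: Bseq_def)
  have p_split: "(\<lambda>k. p k * x ^ k) = (\<lambda>k. q k * x ^ k + l * x ^ k)" for x :: real
    by (simp add: q_def algebra_simps)
  have summable: "summable (\<lambda>k. p k * x ^ k)" and
    mean: "(1 - x) * (\<Sum>k. p k * x ^ k) = (1 - x) * (\<Sum>k. q k * x ^ k) + l"
    if x: "0 \<le> x" "x < 1" for x :: real
  proof -
    have "(\<lambda>k. q k * x ^ k) sums (\<Sum>k. q k * x ^ k)"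
      using summable_power_series_if_bounded[OF B x] by (rule summable_sums)
    moreover have "(\<lambda>k. l * x ^ k) sums (l * (1 / (1 - x)))"
      using x by (intro sums_mult geometric_sums) auto
    ultimately have "(\<lambda>k. p k * x ^ k) sums ((\<Sum>k. q k * x ^ k) + l * (1 / (1 - x)))"
      unfolding p_split by (rule sums_add)
    then show "summable (\<lambda>k. p k * x ^ k)"
      and "(1 - x) * (\<Sum>k. p k * x ^ k) = (1 - x) * (\<Sum>k. q k * x ^ k) + l"
      using x by (auto simp: sums_iff field_simps)
  qed
  have "((\<lambda>x. (1 - x) * (\<Sum>k. q k * x ^ k) + l) \<longlongrightarrow> 0 + l) (at_left 1)"
    by (intro tendsto_add abel_mean_tendsto_zero[OF q] tendsto_const)
  moreover have "eventually (\<lambda>x. x \<in> {0<..<1}) (at_left (1::real))"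
    by (rule eventually_at_left_real) auto
  then have "eventually (\<lambda>x. (1 - x) * (\<Sum>k. q k * x ^ k) + l
      = (1 - x) * (\<Sum>k. p k * x ^ k)) (at_left 1)"
    by eventually_elim (simp add: mean)
  ultimately show ?thesis
    unfolding abel_convergent_def using summable by (auto intro: Lim_transform_eventually)
qed

lemma abel_convergent_const: "abel_convergent (\<lambda>n. c) c"
  by (rule abel_convergent_if_tendsto) simp

lemma abel_limit_mono:
  assumes le: "\<And>n. p n \<le> q n"
    and p: "abel_convergent p a" and q: "abel_convergent q b"
  shows "a \<le> b"
proof (rule tendsto_le[OF trivial_limit_at_left_real])
  show "((\<lambda>x. (1 - x) * (\<Sum>k. q k * x ^ k)) \<longlongrightarrow> b) (at_left 1)"
    and "((\<lambda>x. (1 - x) * (\<Sum>k. p k * x ^ k)) \<longlongrightarrow> a) (at_left 1)"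
    using p q by (auto simp: abel_convergent_def)
  have "eventually (\<lambda>x. x \<in> {0<..<1}) (at_left (1::real))"
    by (rule eventually_at_left_real) auto
  then show "eventually (\<lambda>x. (1 - x) * (\<Sum>k. p k * x ^ k) \<le> (1 - x) * (\<Sum>k. q k * x ^ k))
      (at_left 1)"
  proof eventually_elim
    case (elim x)
    then have "(\<Sum>k. p k * x ^ k) \<le> (\<Sum>k. q k * x ^ k)"
      using p q le by (intro suminf_le mult_right_mono) (auto simp: abel_convergent_def)
    with elim show ?case by (intro mult_left_mono) auto
  qed
qed

lemma tendsto_if_subseqs_abel_convergent:
  fixes y :: "nat \<Rightarrow> real"
  assumes subseq: "\<And>r. strict_mono r \<Longrightarrow> abel_convergent (y \<circ> r) c"
  shows "y \<longlonglongrightarrow> c"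
proof (rule ccontr)
  assume "\<not> y \<longlonglongrightarrow> c"
  then obtain e :: real where e: "e > 0"
    and "\<not> eventually (\<lambda>n. dist (y n) c < e) sequentially"
    unfolding tendsto_iff by auto
  then have "frequently (\<lambda>n. \<not> dist (y n) c < e) sequentially"
    by (simp only: not_eventually)
  then have "frequently (\<lambda>n. c + e \<le> y n \<or> y n \<le> c - e) sequentially"
    by (rule frequently_elim1) (auto simp: dist_real_def)
  then have "infinite {n. c + e \<le> y n} \<or> infinite {n. y n \<le> c - e}"
    unfolding frequently_disj_iff frequently_cofinite[symmetric] cofinite_eq_sequentially .
  then show False
  proof
    assume "infinite {n. c + e \<le> y n}"
    then obtain r :: "nat \<Rightarrow> nat" where r: "strict_mono r" "\<And>n. c + e \<le> y (r n)"
      using infinite_enumerate by blast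
    have "c + e \<le> c"
      using abel_limit_mono[OF _ abel_convergent_const[of "c + e"] subseq[OF r(1)]] r(2) by simp
    with e show False by simp
  next
    assume "infinite {n. y n \<le> c - e}"
    then obtain r :: "nat \<Rightarrow> nat" where r: "strict_mono r" "\<And>n. y (r n) \<le> c - e"
      using infinite_enumerate by blast
    have "c \<le> c - e"
      using abel_limit_mono[OF _ subseq[OF r(1)] abel_convergent_const[of "c - e"]] r(2) by simp
    with e show False by simp
  qed
qed

theorem theorem1:
  fixes E :: "real set" and f :: "real \<Rightarrow> real"
  assumes "abel_continuous_on E f"
  shows "continuous_on E f"
proof (rule continuous_on_sequentiallyI)
  fix u a assume u: "\<forall>n. u n \<in> E" and a: "a \<in> E" and "u \<longlonglongrightarrow> a"
  show "(\<lambda>n. f (u n)) \<longlonglongrightarrow> f a"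
  proof (rule tendsto_if_subseqs_abel_convergent)
    fix r :: "nat \<Rightarrow> nat" assume "strict_mono r"
    with \<open>u \<longlonglongrightarrow> a\<close> have "abel_convergent (u \<circ> r) a"
      by (intro abel_convergent_if_tendsto LIMSEQ_subseq_LIMSEQ)
    with assms u a show "abel_convergent ((\<lambda>n. f (u n)) \<circ> r) (f a)"
      unfolding abel_continuous_on_def comp_def by simp
  qed
qed

end
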